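(* Let $\mathcal M$ be a structural causal model with causal diagram $G$, containing a binary treatment $X$ (values $x,x'$), a binary outcome $Y$ (values $y,y'$), and disjoint sets of discrete variables $C$ and $Z$ such that $Z\cup C$ contains no descendant of $X$ in $G$. Fix a value $c$ of $C$ with $P(c)>0$, and let $\beta,\gamma,\theta,\delta\in\mathbb R$. Define the benefit function $$f(c)=\beta P(y_x,y'_{x'}\mid c)+\gamma P(y_x,y_{x'}\mid c)+\theta P(y'_x,y'_{x'}\mid c)+\delta P(y_{x'},y'_x\mid c).$$ Let $$\sigma=\beta-\gamma-\theta+\delta,\qquad W=(\gamma-\delta)P(y_x\mid c)+\delta P(y_{x'}\mid c)+\theta P(y'_{x'}\mid c),$$ $$L=\sum_z \max\Big\{0,\ P(y_x\mid z,c)-P(y_{x'}\mid z,c),\ P(y\mid z,c)-P(y_{x'}\mid z,c),\ P(y_x\mid z,c)-P(y\mid z,c)\Big\}\,P(z\mid c),$$ $$U=\sum_z \min\Big\{P(y_x\mid z,c),\ P(y'_{x'}\mid z,c),\ P(y,x\mid z,c)+P(y',x'\mid z,c),\ P(y_x\mid z,c)-P(y_{x'}\mid z,c)+P(y,x'\mid z,c)+P(y',x\mid z,c)\Big\}\,P(z\mid c),$$ where the sums range over values $z$ of $Z$ with $P(z\mid c)>0$. Then $$W+\sigma U\le f(c)\le W+\sigma L\ \text{ if }\sigma<0,\qquad W+\sigma L\le f(c)\le W+\sigma U\ \text{ if }\sigma>0.$$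
   Context: For a value $x$ of $X$, $Y_x$ denotes the counterfactual (potential-outcome) variable "the value $Y$ would take had $X$ been set to $x$" in the structural causal model, and $y_x$ denotes the event $Y_x=y$ (similarly $y'_x$, $y_{x'}$, $y'_{x'}$). Thus $P(y_x,y'_{x'}\mid c)$ is the joint probability that $Y_x=y$ and $Y_{x'}=y'$ given $C=c$, and $P(y_x\mid z,c)$ is the probability of $Y_x=y$ given $Z=z,C=c$. Terms without subscripts such as $P(y\mid z,c)$, $P(y,x\mid z,c)$ are ordinary (observational) probabilities of the factual variables. Consistency holds: if $X=x$ then $Y_x=Y$. *)

theory Defs
  imports "HOL-Probability.Probability"
begin

text \<open>Endogenous variables have names of type 'v, values of type 'a;
  all exogenous variables are bundled into one state of type 'u with distribution a pmf.
  F v u s is the structural equation of v, given exogenous state u and values s of endogenous variables.\<close>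

definition do_eqs :: "('v \<Rightarrow> 'u \<Rightarrow> ('v \<Rightarrow> 'a) \<Rightarrow> 'a) \<Rightarrow> 'v set \<Rightarrow> ('v \<Rightarrow> 'a) \<Rightarrow> 'u \<Rightarrow> ('v \<Rightarrow> 'a) \<Rightarrow> bool" where
  "do_eqs F W w u s \<longleftrightarrow> (\<forall>v. s v = (if v \<in> W then w v else F v u s))"

definition solution :: "('v \<Rightarrow> 'u \<Rightarrow> ('v \<Rightarrow> 'a) \<Rightarrow> 'a) \<Rightarrow> 'v set \<Rightarrow> ('v \<Rightarrow> 'a) \<Rightarrow> 'u \<Rightarrow> 'v \<Rightarrow> 'a" where
  "solution F W w u = (THE s. do_eqs F W w u s)"

definition causal_edges :: "('v \<Rightarrow> 'v set) \<Rightarrow> ('v \<times> 'v) set" where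
  "causal_edges pa = {(w, v). w \<in> pa v}"

definition descendants :: "('v \<Rightarrow> 'v set) \<Rightarrow> 'v \<Rightarrow> 'v set" where
  "descendants pa X = {v. (X, v) \<in> (causal_edges pa)\<^sup>*}"

definition scm :: "('v \<Rightarrow> 'v set) \<Rightarrow> ('v \<Rightarrow> 'u \<Rightarrow> ('v \<Rightarrow> 'a) \<Rightarrow> 'a) \<Rightarrow> bool" where
  "scm pa F \<longleftrightarrow>
     (\<forall>v u s t. (\<forall>w\<in>pa v. s w = t w) \<longrightarrow> F v u s = F v u t) \<and>
     acyclic (causal_edges pa) \<and>
     (\<forall>W w u. \<exists>!s. do_eqs F W w u s)"

definition obs :: "('v \<Rightarrow> 'u \<Rightarrow> ('v \<Rightarrow> 'a) \<Rightarrow> 'a) \<Rightarrow> 'u \<Rightarrow> 'v \<Rightarrow> 'a" where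
  "obs F u = solution F {} (\<lambda>_. undefined) u"

text \<open>Counterfactual values under do(X = a): cf F X a u Y is Y_a(u).\<close>
definition cf :: "('v \<Rightarrow> 'u \<Rightarrow> ('v \<Rightarrow> 'a) \<Rightarrow> 'a) \<Rightarrow> 'v \<Rightarrow> 'a \<Rightarrow> 'u \<Rightarrow> 'v \<Rightarrow> 'a" where
  "cf F X a u = solution F {X} (\<lambda>_. a) u"

definition agree :: "('v \<Rightarrow> 'a) \<Rightarrow> 'v set \<Rightarrow> ('v \<Rightarrow> 'a) \<Rightarrow> bool" where
  "agree s S v \<longleftrightarrow> (\<forall>w\<in>S. s w = v w)"

definition Pr :: "'u pmf \<Rightarrow> ('u \<Rightarrow> bool) \<Rightarrow> real" where
  "Pr M A = measure_pmf.prob M {u. A u}"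

definition CPr :: "'u pmf \<Rightarrow> ('u \<Rightarrow> bool) \<Rightarrow> ('u \<Rightarrow> bool) \<Rightarrow> real" where
  "CPr M A B = Pr M (\<lambda>u. A u \<and> B u) / Pr M B"

end

theory Submission
  imports Defs
begin

text \<open>Inside every stratum \<open>Z = z, C = c\<close> the benefit probability \<open>P(y\<^sub>x, y'\<^sub>x\<^sub>' | z, c)\<close>
  obeys the Frechet-type bounds obtained from binarity of \<open>X, Y\<close> and consistency alone;
  averaging them with weights \<open>P(z | c)\<close> bounds \<open>P(y\<^sub>x, y'\<^sub>x\<^sub>' | c)\<close> by \<open>L\<close> and \<open>U\<close>. Since \<open>X, Y\<close>
  are binary, the four counterfactual response types have probabilities determined by
  \<open>P(y\<^sub>x | c)\<close>, \<open>P(y\<^sub>x\<^sub>' | c)\<close> and the benefit probability, which makes \<open>f(c)\<close> equal to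
  \<open>W + \<sigma> P(y\<^sub>x, y'\<^sub>x\<^sub>' | c)\<close>.\<close>

lemma Pr_nonneg: "0 \<le> Pr M A"
  by (simp add: Pr_def)

lemma Pr_mono: "(\<And>u. A u \<Longrightarrow> B u) \<Longrightarrow> Pr M A \<le> Pr M B"
  unfolding Pr_def by (rule measure_pmf.finite_measure_mono) auto

lemma Pr_disjoint_add:
  assumes "\<And>u. C u \<longleftrightarrow> A u \<or> B u" and "\<And>u. A u \<Longrightarrow> B u \<Longrightarrow> False"
  shows "Pr M C = Pr M A + Pr M B"
proof -
  have "{u. C u} = {u. A u} \<union> {u. B u}" and "{u. A u} \<inter> {u. B u} = {}"
    using assms by auto
  then show ?thesis
    unfolding Pr_def by (simp add: measure_pmf.finite_measure_Union)
qed

lemma Pr_le_add: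
  assumes "\<And>u. A u \<Longrightarrow> B u \<or> C u"
  shows "Pr M A \<le> Pr M B + Pr M C"
proof -
  have "Pr M A \<le> Pr M (\<lambda>u. B u \<or> C u)"
    using assms by (rule Pr_mono)
  also have "\<dots> \<le> Pr M B + Pr M C"
    unfolding Pr_def Collect_disj_eq by (rule measure_subadditive) (simp_all add: measure_pmf.emeasure_finite)
  finally show ?thesis .
qed

lemma Pr_sum_partition:
  assumes "finite S" and "\<And>u. A u \<Longrightarrow> \<exists>!k\<in>S. E k u"
  shows "Pr M A = (\<Sum>k\<in>S. Pr M (\<lambda>u. A u \<and> E k u))"
proof -
  have "{u. A u} = (\<Union>k\<in>S. {u. A u \<and> E k u})"
    using assms(2) by blast
  moreover have "disjoint_family_on (\<lambda>k. {u. A u \<and> E k u}) S"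
    using assms(2) by (auto simp: disjoint_family_on_def)
  ultimately show ?thesis
    unfolding Pr_def using assms(1) by (simp add: measure_finite_Union measure_pmf.emeasure_finite)
qed

lemma CPr_nonneg: "0 \<le> CPr M A G"
  by (simp add: CPr_def Pr_nonneg)

lemma CPr_mono: "(\<And>u. G u \<Longrightarrow> A u \<Longrightarrow> B u) \<Longrightarrow> CPr M A G \<le> CPr M B G"
  unfolding CPr_def by (rule divide_right_mono) (auto intro!: Pr_mono simp: Pr_nonneg)

lemma CPr_disjoint_add:
  assumes "\<And>u. G u \<Longrightarrow> C u \<longleftrightarrow> A u \<or> B u" and "\<And>u. G u \<Longrightarrow> A u \<Longrightarrow> B u \<Longrightarrow> False"
  shows "CPr M C G = CPr M A G + CPr M B G"
proof -
  have "Pr M (\<lambda>u. C u \<and> G u) = Pr M (\<lambda>u. A u \<and> G u) + Pr M (\<lambda>u. B u \<and> G u)"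
    by (rule Pr_disjoint_add) (use assms in blast)+
  then show ?thesis
    unfolding CPr_def by (simp add: add_divide_distrib)
qed

lemma CPr_le_add:
  assumes "\<And>u. G u \<Longrightarrow> A u \<Longrightarrow> B u \<or> C u"
  shows "CPr M A G \<le> CPr M B G + CPr M C G"
proof -
  have "Pr M (\<lambda>u. A u \<and> G u) \<le> Pr M (\<lambda>u. B u \<and> G u) + Pr M (\<lambda>u. C u \<and> G u)"
    by (rule Pr_le_add) (use assms in blast)
  then show ?thesis
    unfolding CPr_def add_divide_distrib[symmetric] by (rule divide_right_mono) (simp add: Pr_nonneg)
qed

lemma CPr_le_add3:
  assumes "\<And>u. G u \<Longrightarrow> A u \<Longrightarrow> B u \<or> C u \<or> D u"
  shows "CPr M A G \<le> CPr M B G + CPr M C G + CPr M D G"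
proof -
  have "CPr M A G \<le> CPr M B G + CPr M (\<lambda>u. C u \<or> D u) G"
    by (rule CPr_le_add) (use assms in blast)
  moreover have "CPr M (\<lambda>u. C u \<or> D u) G \<le> CPr M C G + CPr M D G"
    by (rule CPr_le_add) blast
  ultimately show ?thesis by linarith
qed

lemma CPr_total_probability:
  assumes "finite S" and "\<And>u. G u \<Longrightarrow> \<exists>!k\<in>S. E k u"
  shows "CPr M A G = (\<Sum>k\<in>{k\<in>S. CPr M (E k) G > 0}. CPr M A (\<lambda>u. E k u \<and> G u) * CPr M (E k) G)"
proof -
  let ?S' = "{k\<in>S. CPr M (E k) G > 0}"
  have null_cell: "Pr M (\<lambda>u. A u \<and> G u \<and> E k u) = 0" if "k \<in> S - ?S'" for k
  proof -
    from that have "Pr M (\<lambda>u. E k u \<and> G u) \<le> 0 \<or> Pr M G \<le> 0"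
      by (auto simp: CPr_def zero_less_divide_iff not_less Pr_nonneg)
    moreover have "Pr M (\<lambda>u. A u \<and> G u \<and> E k u) \<le> Pr M (\<lambda>u. E k u \<and> G u)"
      and "Pr M (\<lambda>u. E k u \<and> G u) \<le> Pr M G"
      by (auto intro: Pr_mono)
    ultimately show ?thesis
      using Pr_nonneg[of M] by (meson order.antisym order.trans)
  qed
  have cell: "CPr M A (\<lambda>u. E k u \<and> G u) * CPr M (E k) G = Pr M (\<lambda>u. A u \<and> G u \<and> E k u) / Pr M G"
    if "k \<in> ?S'" for k
  proof -
    from that have "Pr M (\<lambda>u. E k u \<and> G u) \<noteq> 0"
      by (auto simp: CPr_def)
    then show ?thesis
      by (simp add: CPr_def conj_ac)
  qed
  have "Pr M (\<lambda>u. A u \<and> G u) = (\<Sum>k\<in>S. Pr M (\<lambda>u. A u \<and> G u \<and> E k u))"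
    using Pr_sum_partition[OF assms(1), of "\<lambda>u. A u \<and> G u" E M] assms(2) by (simp add: conj_assoc)
  also have "\<dots> = (\<Sum>k\<in>?S'. Pr M (\<lambda>u. A u \<and> G u \<and> E k u))"
    by (rule sum.mono_neutral_right) (use assms(1) null_cell in auto)
  finally have "Pr M (\<lambda>u. A u \<and> G u) / Pr M G = (\<Sum>k\<in>?S'. Pr M (\<lambda>u. A u \<and> G u \<and> E k u) / Pr M G)"
    by (simp add: sum_divide_distrib)
  also have "\<dots> = (\<Sum>k\<in>?S'. CPr M A (\<lambda>u. E k u \<and> G u) * CPr M (E k) G)"
    by (rule sum.cong) (simp_all add: cell)
  finally show ?thesis
    unfolding CPr_def[of M A G] .
qed

lemma agree_ex1_extensional: "\<exists>!z\<in>extensional Z. agree s Z z"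
proof
  show "restrict s Z \<in> extensional Z \<and> agree s Z (restrict s Z)"
    by (simp add: agree_def)
  show "z = restrict s Z" if "z \<in> extensional Z \<and> agree s Z z" for z
    using that by (auto simp: agree_def extensional_def fun_eq_iff)
qed

lemma scm_solution:
  assumes "scm pa F"
  shows "do_eqs F W w u (solution F W w u)"
proof -
  have "\<exists>!s. do_eqs F W w u s"
    using assms by (simp add: scm_def)
  then show ?thesis
    unfolding solution_def by (rule theI')
qed

lemma scm_obs_eq:
  assumes "scm pa F"
  shows "obs F u v = F v u (obs F u)"
  using scm_solution[OF assms] by (simp add: obs_def do_eqs_def)

lemma scm_cf_eq:
  assumes "scm pa F" and "v \<noteq> X"
  shows "cf F X a u v = F v u (cf F X a u)"
  using scm_solution[OF assms(1)] assms(2) by (simp add: cf_def do_eqs_def)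

lemma scm_cf_consistency:
  assumes "scm pa F" and "obs F u X = a"
  shows "cf F X a u = obs F u"
proof -
  have "do_eqs F {X} (\<lambda>_. a) u (obs F u)"
    using assms scm_obs_eq[OF assms(1)] by (auto simp: do_eqs_def)
  moreover have "do_eqs F {X} (\<lambda>_. a) u (cf F X a u)"
    using scm_solution[OF assms(1)] by (simp add: cf_def)
  ultimately show ?thesis
    using assms(1) unfolding scm_def by blast
qed

locale binary_counterfactuals =
  fixes Yx Yx' Yobs :: "'u \<Rightarrow> 'a" and Xobs :: "'u \<Rightarrow> 'b"
    and x x' :: 'b and y y' :: 'a
  assumes y_neq: "y \<noteq> y'"
    and Yx_range: "Yx u = y \<or> Yx u = y'"
    and Yx'_range: "Yx' u = y \<or> Yx' u = y'"
    and Xobs_range: "Xobs u = x \<or> Xobs u = x'"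
    and consistent_x: "Xobs u = x \<Longrightarrow> Yx u = Yobs u"
    and consistent_x': "Xobs u = x' \<Longrightarrow> Yx' u = Yobs u"
begin

lemma benefit_lower_bound:
  "max (max 0 (CPr M (\<lambda>u. Yx u = y) G - CPr M (\<lambda>u. Yx' u = y) G))
       (max (CPr M (\<lambda>u. Yobs u = y) G - CPr M (\<lambda>u. Yx' u = y) G)
            (CPr M (\<lambda>u. Yx u = y) G - CPr M (\<lambda>u. Yobs u = y) G))
   \<le> CPr M (\<lambda>u. Yx u = y \<and> Yx' u = y') G"
proof -
  have "CPr M (\<lambda>u. Yx u = y) G \<le> CPr M (\<lambda>u. Yx u = y \<and> Yx' u = y') G + CPr M (\<lambda>u. Yx' u = y) G"
    by (rule CPr_le_add) (use Yx'_range in blast)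
  moreover have "CPr M (\<lambda>u. Yobs u = y) G
      \<le> CPr M (\<lambda>u. Yx u = y \<and> Yx' u = y') G + CPr M (\<lambda>u. Yx' u = y) G"
    by (rule CPr_le_add) (use Yx'_range Xobs_range consistent_x consistent_x' in metis)
  moreover have "CPr M (\<lambda>u. Yx u = y) G
      \<le> CPr M (\<lambda>u. Yx u = y \<and> Yx' u = y') G + CPr M (\<lambda>u. Yobs u = y) G"
    by (rule CPr_le_add) (use Yx'_range Xobs_range consistent_x consistent_x' in metis)
  ultimately show ?thesis
    using CPr_nonneg[of M "\<lambda>u. Yx u = y \<and> Yx' u = y'" G] by linarith
qed

lemma benefit_upper_bound:
  "CPr M (\<lambda>u. Yx u = y \<and> Yx' u = y') G
   \<le> min (min (CPr M (\<lambda>u. Yx u = y) G) (CPr M (\<lambda>u. Yx' u = y') G))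
         (min (CPr M (\<lambda>u. Yobs u = y \<and> Xobs u = x) G + CPr M (\<lambda>u. Yobs u = y' \<and> Xobs u = x') G)
              (CPr M (\<lambda>u. Yx u = y) G - CPr M (\<lambda>u. Yx' u = y) G
                 + CPr M (\<lambda>u. Yobs u = y \<and> Xobs u = x') G + CPr M (\<lambda>u. Yobs u = y' \<and> Xobs u = x) G))"
proof -
  let ?b = "CPr M (\<lambda>u. Yx u = y \<and> Yx' u = y') G"
  have "?b \<le> CPr M (\<lambda>u. Yx u = y) G" and "?b \<le> CPr M (\<lambda>u. Yx' u = y') G"
    by (auto intro: CPr_mono)
  moreover have "?b \<le> CPr M (\<lambda>u. Yobs u = y \<and> Xobs u = x) G + CPr M (\<lambda>u. Yobs u = y' \<and> Xobs u = x') G"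
    by (rule CPr_le_add) (use Xobs_range consistent_x consistent_x' in metis)
  moreover have "?b + CPr M (\<lambda>u. Yx' u = y) G
      = CPr M (\<lambda>u. (Yx u = y \<and> Yx' u = y') \<or> Yx' u = y) G"
    by (rule CPr_disjoint_add[symmetric]) (use y_neq in auto)
  moreover have "CPr M (\<lambda>u. (Yx u = y \<and> Yx' u = y') \<or> Yx' u = y) G
      \<le> CPr M (\<lambda>u. Yx u = y) G + CPr M (\<lambda>u. Yobs u = y \<and> Xobs u = x') G
         + CPr M (\<lambda>u. Yobs u = y' \<and> Xobs u = x) G"
    by (rule CPr_le_add3) (use Yx_range Xobs_range consistent_x consistent_x' in metis)
  ultimately show ?thesis by linarith
qed

lemma benefit_combination:
  "\<beta> * CPr M (\<lambda>u. Yx u = y \<and> Yx' u = y') G + \<gamma> * CPr M (\<lambda>u. Yx u = y \<and> Yx' u = y) G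
     + \<theta> * CPr M (\<lambda>u. Yx u = y' \<and> Yx' u = y') G + \<delta> * CPr M (\<lambda>u. Yx' u = y \<and> Yx u = y') G
   = (\<gamma> - \<delta>) * CPr M (\<lambda>u. Yx u = y) G + \<delta> * CPr M (\<lambda>u. Yx' u = y) G
     + \<theta> * CPr M (\<lambda>u. Yx' u = y') G
     + (\<beta> - \<gamma> - \<theta> + \<delta>) * CPr M (\<lambda>u. Yx u = y \<and> Yx' u = y') G"
proof -
  have "CPr M (\<lambda>u. Yx u = y) G = CPr M (\<lambda>u. Yx u = y \<and> Yx' u = y) G
                                 + CPr M (\<lambda>u. Yx u = y \<and> Yx' u = y') G"
    and "CPr M (\<lambda>u. Yx' u = y) G = CPr M (\<lambda>u. Yx u = y \<and> Yx' u = y) G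
                                 + CPr M (\<lambda>u. Yx' u = y \<and> Yx u = y') G"
    and "CPr M (\<lambda>u. Yx' u = y') G = CPr M (\<lambda>u. Yx u = y \<and> Yx' u = y') G
                                 + CPr M (\<lambda>u. Yx u = y' \<and> Yx' u = y') G"
    by (rule CPr_disjoint_add; use Yx_range Yx'_range y_neq in metis)+
  then show ?thesis
    by (simp add: algebra_simps)
qed

end

theorem theorem1:
  fixes pa :: "'v::finite \<Rightarrow> 'v set"
    and F :: "'v \<Rightarrow> 'u \<Rightarrow> ('v \<Rightarrow> 'a::finite) \<Rightarrow> 'a"
    and Pu :: "'u pmf"
    and X Y :: 'v and x x' y y' :: 'a
    and C Z :: "'v set" and c :: "'v \<Rightarrow> 'a"
    and \<beta> \<gamma> \<theta> \<delta> :: real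
  assumes model: "scm pa F"
    and XY: "X \<noteq> Y"
    and bin_x: "x \<noteq> x'" "\<forall>u s. F X u s \<in> {x, x'}"
    and bin_y: "y \<noteq> y'" "\<forall>u s. F Y u s \<in> {y, y'}"
    and disj: "C \<inter> Z = {}"
    and nondesc: "(Z \<union> C) \<inter> descendants pa X = {}"
    and pos_c: "Pr Pu (\<lambda>u. agree (obs F u) C c) > 0"
  defines "cC \<equiv> (\<lambda>u. agree (obs F u) C c)"
    and "Yx \<equiv> (\<lambda>a u. cf F X a u Y)"
    and "zc \<equiv> (\<lambda>z u. agree (obs F u) Z z \<and> agree (obs F u) C c)"
  defines "f \<equiv> \<beta> * CPr Pu (\<lambda>u. Yx x u = y \<and> Yx x' u = y') cC
              + \<gamma> * CPr Pu (\<lambda>u. Yx x u = y \<and> Yx x' u = y) cC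
              + \<theta> * CPr Pu (\<lambda>u. Yx x u = y' \<and> Yx x' u = y') cC
              + \<delta> * CPr Pu (\<lambda>u. Yx x' u = y \<and> Yx x u = y') cC"
    and "\<sigma> \<equiv> \<beta> - \<gamma> - \<theta> + \<delta>"
    and "W \<equiv> (\<gamma> - \<delta>) * CPr Pu (\<lambda>u. Yx x u = y) cC
              + \<delta> * CPr Pu (\<lambda>u. Yx x' u = y) cC
              + \<theta> * CPr Pu (\<lambda>u. Yx x' u = y') cC"
    and "Zs \<equiv> {z \<in> extensional Z. CPr Pu (\<lambda>u. agree (obs F u) Z z) cC > 0}"
  defines "L \<equiv> (\<Sum>z\<in>Zs.
              max (max 0 (CPr Pu (\<lambda>u. Yx x u = y) (zc z) - CPr Pu (\<lambda>u. Yx x' u = y) (zc z)))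
                  (max (CPr Pu (\<lambda>u. obs F u Y = y) (zc z) - CPr Pu (\<lambda>u. Yx x' u = y) (zc z))
                       (CPr Pu (\<lambda>u. Yx x u = y) (zc z) - CPr Pu (\<lambda>u. obs F u Y = y) (zc z)))
              * CPr Pu (\<lambda>u. agree (obs F u) Z z) cC)"
    and "U \<equiv> (\<Sum>z\<in>Zs.
              min (min (CPr Pu (\<lambda>u. Yx x u = y) (zc z)) (CPr Pu (\<lambda>u. Yx x' u = y') (zc z)))
                  (min (CPr Pu (\<lambda>u. obs F u Y = y \<and> obs F u X = x) (zc z)
                          + CPr Pu (\<lambda>u. obs F u Y = y' \<and> obs F u X = x') (zc z))
                       (CPr Pu (\<lambda>u. Yx x u = y) (zc z) - CPr Pu (\<lambda>u. Yx x' u = y) (zc z)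
                          + CPr Pu (\<lambda>u. obs F u Y = y \<and> obs F u X = x') (zc z)
                          + CPr Pu (\<lambda>u. obs F u Y = y' \<and> obs F u X = x) (zc z)))
              * CPr Pu (\<lambda>u. agree (obs F u) Z z) cC)"
  shows "(\<sigma> < 0 \<longrightarrow> W + \<sigma> * U \<le> f \<and> f \<le> W + \<sigma> * L) \<and>
         (\<sigma> > 0 \<longrightarrow> W + \<sigma> * L \<le> f \<and> f \<le> W + \<sigma> * U)"
proof -
  have Yx_range: "Yx a u = y \<or> Yx a u = y'" for a u
    using bin_y(2) scm_cf_eq[OF model XY[symmetric]] unfolding Yx_def by auto
  have X_range: "obs F u X = x \<or> obs F u X = x'" for u
    using bin_x(2) scm_obs_eq[OF model] by auto
  have consistency: "obs F u X = a \<Longrightarrow> Yx a u = obs F u Y" for a u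
    using scm_cf_consistency[OF model] unfolding Yx_def by auto
  interpret binary_counterfactuals "Yx x" "Yx x'" "\<lambda>u. obs F u Y" "\<lambda>u. obs F u X" x x' y y'
    by unfold_locales (use Yx_range X_range consistency bin_y(1) in auto)
  let ?b = "\<lambda>G. CPr Pu (\<lambda>u. Yx x u = y \<and> Yx x' u = y') G"
  \<comment> \<open>The hypotheses on \<open>Z \<union> C\<close> serve in the paper to identify \<open>P(y\<^sub>x | z, c)\<close> from
    experiments; the bounds themselves need only binarity and consistency.\<close>
  have strata: "?b cC = (\<Sum>z\<in>Zs. ?b (zc z) * CPr Pu (\<lambda>u. agree (obs F u) Z z) cC)"
    unfolding Zs_def zc_def cC_def
    by (rule CPr_total_probability) (simp_all add: agree_ex1_extensional)
  have "L \<le> ?b cC"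
    unfolding strata L_def by (intro sum_mono mult_right_mono benefit_lower_bound CPr_nonneg)
  moreover have "?b cC \<le> U"
    unfolding strata U_def by (intro sum_mono mult_right_mono benefit_upper_bound CPr_nonneg)
  moreover have "f = W + \<sigma> * ?b cC"
    unfolding f_def W_def \<sigma>_def by (rule benefit_combination)
  ultimately show ?thesis
    by (auto intro: mult_left_mono mult_left_mono_neg)
qed

end
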